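(* Let $X$ be a real Hilbert space, $r>0$, and let $Z\subset X$ be an $r$-prox-regular set. Then the following two conditions are equivalent: (a) there exists $\rho\in(0,r/5)$ such that for every $x\in Z$ there exists $\bar x\in Z$ with $|x-\bar x|^2+\rho^2<2r\rho$ and $B_{3\rho}(\bar x)\subset Z$; (b) there exist $s>0$ and $d>0$ such that for every $x\in Z$ there exists $x^*\in Z$ with $|x-x^*|\le d$ such that for all $\alpha\in(0,1]$ we have $x+\alpha(x^*-x)+\alpha B_s(0)\subset Z$.
   Context: $X$ is a real Hilbert space with scalar product $\langle\cdot,\cdot\rangle$ and norm $|\cdot|$; $\mathrm{dist}(x,Z)=\inf\{|x-z|:z\in Z\}$; $B_\delta(x)=\{y\in X:|y-x|\le\delta\}$ is the closed ball, and $x+\alpha B_s(0)=\{x+\alpha v: |v|\le s\}$. A closed connected set $Z\subset X$ is called $r$-prox-regular ($r>0$) if for every $y\in X$ with $\mathrm{dist}(y,Z)=d\in(0,r)$ there exists $x\in Z$ such that $\mathrm{dist}\left(x+\frac{r}{d}(y-x),Z\right)=\frac{r}{d}|y-x|=r$. *)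

theory Defs
  imports "HOL-Analysis.Analysis"
begin

definition prox_regular :: "real \<Rightarrow> ('a::{real_inner,complete_space}) set \<Rightarrow> bool" where
  "prox_regular r Z \<longleftrightarrow> r > 0 \<and> closed Z \<and> connected Z \<and>
     (\<forall>y d. infdist y Z = d \<and> 0 < d \<and> d < r \<longrightarrow>
        (\<exists>x\<in>Z. infdist (x + (r / d) *\<^sub>R (y - x)) Z = (r / d) * norm (y - x)
               \<and> (r / d) * norm (y - x) = r))"

end

theory Submission
  imports Defs
begin

text \<open>
  (a) \<Longrightarrow> (b): take \<open>x\<^sup>* = x\<^sub>b\<close>, \<open>s = \<rho>\<close> and \<open>d = r\<close>. If a cone point
  \<open>y = (1 - \<alpha>) x + \<alpha> w\<close>, \<open>w = x\<^sub>b + v\<close>, were outside \<open>Z\<close>, it would lie within distance \<open>r\<close>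
  of \<open>x\<close>, so prox-regularity would put it into an open ball \<open>B\<close> of radius \<open>r\<close> disjoint from \<open>Z\<close>.
  The centre \<open>c\<close> of \<open>B\<close> is at distance \<open>\<ge> r\<close> from \<open>x\<close> and \<open>\<ge> r + 2\<rho>\<close> from \<open>w\<close>, because
  \<open>B\<^sub>2\<^sub>\<rho>(w) \<subseteq> Z\<close>. In a Hilbert space
  \<open>|c - y|\<^sup>2 = (1 - \<alpha>)|c - x|\<^sup>2 + \<alpha>|c - w|\<^sup>2 - \<alpha>(1 - \<alpha>)|x - w|\<^sup>2\<close>, and \<open>|x - w|\<^sup>2 < 4r\<rho>\<close>
  then forces \<open>|c - y| > r\<close>, a contradiction.

  (b) \<Longrightarrow> (a): the cone with small opening \<open>\<alpha>\<close> contains the ball of radius \<open>\<alpha>s\<close> around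
  \<open>x\<^sub>b = x + \<alpha>(x\<^sup>* - x)\<close>, and \<open>|x - x\<^sub>b| \<le> \<alpha>d\<close>. With \<open>\<rho> = \<alpha>s/3\<close> the left-hand side
  \<open>|x - x\<^sub>b|\<^sup>2 + \<rho>\<^sup>2\<close> is of order \<open>\<alpha>\<^sup>2\<close>, whereas \<open>2r\<rho>\<close> is of order \<open>\<alpha>\<close>.
\<close>

definition interior_balls :: "real \<Rightarrow> real \<Rightarrow> 'a::real_normed_vector set \<Rightarrow> bool" where
  "interior_balls r \<rho> Z \<longleftrightarrow>
     (\<forall>x\<in>Z. \<exists>xb\<in>Z. (norm (x - xb))\<^sup>2 + \<rho>\<^sup>2 < 2 * r * \<rho> \<and> cball xb (3 * \<rho>) \<subseteq> Z)"

definition cone_condition :: "real \<Rightarrow> real \<Rightarrow> 'a::real_normed_vector set \<Rightarrow> bool" where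
  "cone_condition s d Z \<longleftrightarrow>
     (\<forall>x\<in>Z. \<exists>xs\<in>Z. norm (x - xs) \<le> d \<and>
        (\<forall>\<alpha>. 0 < \<alpha> \<and> \<alpha> \<le> 1 \<longrightarrow>
           (\<forall>v. norm v \<le> s \<longrightarrow> x + \<alpha> *\<^sub>R (xs - x) + \<alpha> *\<^sub>R v \<in> Z)))"

lemma norm_diff_convex_comb_power2:
  fixes c x w :: "'a::real_inner"
  shows "(norm (c - ((1 - \<alpha>) *\<^sub>R x + \<alpha> *\<^sub>R w)))\<^sup>2 =
     (1 - \<alpha>) * (norm (c - x))\<^sup>2 + \<alpha> * (norm (c - w))\<^sup>2 - \<alpha> * (1 - \<alpha>) * (norm (x - w))\<^sup>2"
  unfolding power2_norm_eq_inner
  by (simp add: inner_diff_left inner_diff_right inner_add_left inner_add_right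
      inner_commute algebra_simps)

lemma convex_comb_notin_ball:
  fixes c x w :: "'a::real_inner"
  assumes "0 < e" and "0 < \<alpha>" and "\<alpha> \<le> 1"
    and "r \<le> dist c x" and "r + e \<le> dist c w" and "(dist x w)\<^sup>2 \<le> 2 * r * e"
  shows "(1 - \<alpha>) *\<^sub>R x + \<alpha> *\<^sub>R w \<notin> ball c r"
proof
  assume "(1 - \<alpha>) *\<^sub>R x + \<alpha> *\<^sub>R w \<in> ball c r"
  then have inside: "(norm (c - ((1 - \<alpha>) *\<^sub>R x + \<alpha> *\<^sub>R w)))\<^sup>2 < r\<^sup>2"
    by (simp add: dist_norm power_strict_mono)
  have "0 \<le> 2 * r * e"
    using order_trans[OF zero_le_power2 assms(6)] .
  then have "0 \<le> r"
    using \<open>0 < e\<close> by (simp add: zero_le_mult_iff)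
  have "(1 - \<alpha>) * r\<^sup>2 \<le> (1 - \<alpha>) * (norm (c - x))\<^sup>2"
    using assms(3,4) \<open>0 \<le> r\<close> by (simp add: dist_norm mult_left_mono power_mono)
  moreover have "\<alpha> * (r + e)\<^sup>2 \<le> \<alpha> * (norm (c - w))\<^sup>2"
    using assms(1,2,5) \<open>0 \<le> r\<close> by (simp add: dist_norm mult_left_mono power_mono)
  moreover have "\<alpha> * (1 - \<alpha>) * (norm (x - w))\<^sup>2 \<le> \<alpha> * (2 * r * e)"
  proof -
    have "\<alpha> * (1 - \<alpha>) * (norm (x - w))\<^sup>2 \<le> \<alpha> * (norm (x - w))\<^sup>2"
      using assms(2,3) by (simp add: mult_left_le_one_le mult_right_mono)
    also have "\<dots> \<le> \<alpha> * (2 * r * e)"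
      using assms(2,6) by (simp add: dist_norm mult_left_mono)
    finally show ?thesis .
  qed
  ultimately have "r\<^sup>2 + \<alpha> * e\<^sup>2 \<le> (norm (c - ((1 - \<alpha>) *\<^sub>R x + \<alpha> *\<^sub>R w)))\<^sup>2"
    unfolding norm_diff_convex_comb_power2 by (simp add: power2_eq_square algebra_simps)
  moreover have "0 < \<alpha> * e\<^sup>2"
    using assms(1,2) by simp
  ultimately show False
    using inside by linarith
qed

lemma ball_cball_disjoint_imp_dist_ge:
  fixes c w :: "'a::real_normed_vector"
  assumes "ball c r \<inter> cball w e = {}" and "0 < r" and "0 \<le> e"
  shows "r + e \<le> dist c w"
proof (rule ccontr)
  assume "\<not> r + e \<le> dist c w"
  have "c \<in> ball c r"
    using assms(2) by simp
  then have "c \<notin> cball w e"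
    using assms(1) by blast
  then have "0 < dist c w" and "e < dist c w"
    using assms(3) by (auto simp: dist_commute)
  define z where "z = w + (e / dist c w) *\<^sub>R (c - w)"
  have "dist w z = e"
    using \<open>0 < dist c w\<close> assms(3) by (simp add: z_def dist_norm)
  have "c - z = (1 - e / dist c w) *\<^sub>R (c - w)"
    by (simp add: z_def algebra_simps)
  moreover have "e / dist c w < 1"
    using \<open>0 < dist c w\<close> \<open>e < dist c w\<close> by simp
  ultimately have "dist c z = (1 - e / dist c w) * dist c w"
    by (simp add: dist_norm)
  also have "\<dots> = dist c w - e"
    using \<open>0 < dist c w\<close> by (simp add: field_simps)
  finally have "dist c z = dist c w - e" .
  then have "z \<in> ball c r \<inter> cball w e"
    using \<open>dist w z = e\<close> \<open>\<not> r + e \<le> dist c w\<close> by simp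
  then show False
    using assms(1) by blast
qed

text \<open>The centre \<open>x + (r/d)(y - x)\<close> supplied by prox-regularity lies at distance \<open>r - d\<close>
  from \<open>y\<close>, where \<open>d = dist(y, Z)\<close>.\<close>

lemma prox_regular_exterior_ball:
  assumes "prox_regular r Z" and "y \<notin> Z" and "infdist y Z < r"
  obtains c where "y \<in> ball c r" and "ball c r \<inter> Z = {}"
proof (cases "Z = {}")
  case True
  then show ?thesis
    using that[of y] assms(1) by (simp add: prox_regular_def)
next
  case False
  define d where "d = infdist y Z"
  have "0 < r" and "closed Z"
    using assms(1) by (auto simp: prox_regular_def)
  have "d \<noteq> 0"
    using assms(2) \<open>closed Z\<close> False by (simp add: d_def in_closed_iff_infdist_zero)
  then have "0 < d"
    using infdist_nonneg[of y Z] by (simp add: d_def)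
  define c where "c x = x + (r / d) *\<^sub>R (y - x)" for x
  obtain x where "infdist (c x) Z = (r / d) * norm (y - x)" and "(r / d) * norm (y - x) = r"
    using assms(1,3) \<open>0 < d\<close> unfolding prox_regular_def c_def d_def by blast
  then have "infdist (c x) Z = r" and "norm (y - x) = d"
    using \<open>0 < r\<close> \<open>0 < d\<close> by (auto simp: field_simps)
  have "c x - y = (r / d - 1) *\<^sub>R (y - x)"
    by (simp add: c_def algebra_simps)
  moreover have "1 < r / d"
    using \<open>0 < d\<close> assms(3) by (simp add: d_def)
  ultimately have "dist (c x) y = (r / d - 1) * d"
    using \<open>norm (y - x) = d\<close> by (simp add: dist_norm)
  also have "\<dots> = r - d"
    using \<open>0 < d\<close> by (simp add: field_simps)
  finally have "dist (c x) y = r - d" .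
  moreover have "ball (c x) r \<inter> Z = {}"
  proof -
    have "r \<le> dist (c x) z" if "z \<in> Z" for z
      using infdist_le[OF that, of "c x"] \<open>infdist (c x) Z = r\<close> by simp
    then show ?thesis
      by (force simp: not_less[symmetric])
  qed
  ultimately show ?thesis
    using that[of "c x"] \<open>0 < d\<close> by (simp add: dist_commute)
qed

lemma prox_regular_segment_to_ball_mem:
  assumes "prox_regular r Z" and "x \<in> Z" and "cball w e \<subseteq> Z" and "0 < e" and "2 * e \<le> r"
    and "(dist x w)\<^sup>2 < 2 * r * e" and "0 < \<alpha>" and "\<alpha> \<le> 1"
  shows "(1 - \<alpha>) *\<^sub>R x + \<alpha> *\<^sub>R w \<in> Z"
proof (rule ccontr)
  let ?y = "(1 - \<alpha>) *\<^sub>R x + \<alpha> *\<^sub>R w"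
  assume "?y \<notin> Z"
  have "0 \<le> r"
    using assms(4,5) by linarith
  then have "r * (2 * e) \<le> r * r"
    using assms(5) by (intro mult_left_mono)
  then have "(dist x w)\<^sup>2 < r\<^sup>2"
    using assms(6) by (simp add: power2_eq_square algebra_simps)
  then have "dist x w < r"
    using assms(4,5) by (simp add: power_less_imp_less_base)
  have "infdist ?y Z \<le> dist ?y x"
    using infdist_le[OF assms(2)] by simp
  also have "\<dots> = norm (\<alpha> *\<^sub>R (w - x))"
    by (simp add: dist_norm algebra_simps)
  also have "\<dots> = \<alpha> * dist x w"
    using assms(7) by (simp add: dist_norm norm_minus_commute)
  also have "\<dots> \<le> dist x w"
    using assms(7,8) by (simp add: mult_left_le_one_le)
  also have "\<dots> < r"
    by fact
  finally obtain c where "?y \<in> ball c r" and c: "ball c r \<inter> Z = {}"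
    using prox_regular_exterior_ball[OF assms(1) \<open>?y \<notin> Z\<close>] by blast
  moreover have "r \<le> dist c x"
    using c assms(2) by (metis IntI empty_iff mem_ball not_le)
  moreover have "r + e \<le> dist c w"
    using c assms(1,3,4) by (intro ball_cball_disjoint_imp_dist_ge) (auto simp: prox_regular_def)
  ultimately show False
    using convex_comb_notin_ball[of e \<alpha> r c x w] assms(4,6-8) by simp
qed

lemma prox_regular_cone_mem:
  assumes "prox_regular r Z" and "x \<in> Z" and "0 < \<rho>" and "4 * \<rho> \<le> r"
    and "(norm (x - xb))\<^sup>2 + \<rho>\<^sup>2 < 2 * r * \<rho>" and "cball xb (3 * \<rho>) \<subseteq> Z"
    and "0 < \<alpha>" and "\<alpha> \<le> 1" and "norm v \<le> \<rho>"
  shows "x + \<alpha> *\<^sub>R (xb - x) + \<alpha> *\<^sub>R v \<in> Z"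
proof -
  define w where "w = xb + v"
  have "cball w (2 * \<rho>) \<subseteq> cball xb (3 * \<rho>)"
  proof
    fix p assume "p \<in> cball w (2 * \<rho>)"
    moreover have "dist xb w \<le> \<rho>"
      using assms(9) by (simp add: w_def dist_norm)
    ultimately show "p \<in> cball xb (3 * \<rho>)"
      using dist_triangle[of xb p w] by simp
  qed
  then have w_ball: "cball w (2 * \<rho>) \<subseteq> Z"
    using assms(6) by blast
  have "(dist x w)\<^sup>2 \<le> (norm (x - xb) + \<rho>)\<^sup>2"
    using norm_triangle_ineq4[of "x - xb" v] assms(9)
    by (simp add: w_def dist_norm algebra_simps power_mono)
  then have xw: "(dist x w)\<^sup>2 < 2 * r * (2 * \<rho>)"
    using sum_squares_bound[of "norm (x - xb)" \<rho>] assms(5)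
    by (simp add: power2_eq_square algebra_simps)
  have "(1 - \<alpha>) *\<^sub>R x + \<alpha> *\<^sub>R w \<in> Z"
    using prox_regular_segment_to_ball_mem[OF assms(1,2) w_ball _ _ xw assms(7,8)] assms(3,4)
    by simp
  then show ?thesis
    by (simp add: w_def algebra_simps)
qed

lemma interior_balls_imp_cone_condition:
  assumes "prox_regular r Z" and "0 < \<rho>" and "4 * \<rho> \<le> r" and "interior_balls r \<rho> Z"
  shows "cone_condition \<rho> r Z"
  unfolding cone_condition_def
proof
  fix x assume "x \<in> Z"
  then obtain xb where "xb \<in> Z" and xb: "(norm (x - xb))\<^sup>2 + \<rho>\<^sup>2 < 2 * r * \<rho>"
    and "cball xb (3 * \<rho>) \<subseteq> Z"
    using assms(4) by (auto simp: interior_balls_def)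
  have "(norm (x - xb))\<^sup>2 < 2 * r * \<rho>"
    using xb zero_le_power2[of \<rho>] by linarith
  also have "\<dots> < r\<^sup>2"
    using mult_strict_left_mono[of "2 * \<rho>" r r] assms(2,3)
    by (simp add: power2_eq_square algebra_simps)
  finally have "norm (x - xb) \<le> r"
    using assms(2,3) by (simp add: power_less_imp_less_base less_imp_le)
  then show "\<exists>xs\<in>Z. norm (x - xs) \<le> r \<and>
      (\<forall>\<alpha>. 0 < \<alpha> \<and> \<alpha> \<le> 1 \<longrightarrow> (\<forall>v. norm v \<le> \<rho> \<longrightarrow> x + \<alpha> *\<^sub>R (xs - x) + \<alpha> *\<^sub>R v \<in> Z))"
    using prox_regular_cone_mem[OF assms(1) \<open>x \<in> Z\<close> assms(2,3) xb \<open>cball xb (3 * \<rho>) \<subseteq> Z\<close>]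
      \<open>xb \<in> Z\<close> by blast
qed

lemma cone_condition_imp_interior_balls:
  assumes "0 < \<alpha>" and "\<alpha> \<le> 1" and "0 < s" and "\<alpha> * (d\<^sup>2 + s\<^sup>2) \<le> r * s / 2"
    and "cone_condition s d Z"
  shows "interior_balls r (\<alpha> * s / 3) Z"
  unfolding interior_balls_def
proof
  fix x assume "x \<in> Z"
  then obtain xs where "norm (x - xs) \<le> d"
    and cone: "\<And>v. norm v \<le> s \<Longrightarrow> x + \<alpha> *\<^sub>R (xs - x) + \<alpha> *\<^sub>R v \<in> Z"
    using assms(1,2,5) unfolding cone_condition_def by blast
  define xb where "xb = x + \<alpha> *\<^sub>R (xs - x)"
  have xb_ball: "cball xb (\<alpha> * s) \<subseteq> Z"
  proof
    fix q assume "q \<in> cball xb (\<alpha> * s)"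
    have "norm ((1 / \<alpha>) *\<^sub>R (q - xb)) = norm (q - xb) / \<alpha>"
      using assms(1) by (simp only: norm_scaleR) simp
    also have "\<dots> \<le> s"
      using \<open>q \<in> cball xb (\<alpha> * s)\<close> assms(1)
      by (simp add: dist_norm norm_minus_commute pos_divide_le_eq mult.commute)
    finally have "xb + \<alpha> *\<^sub>R ((1 / \<alpha>) *\<^sub>R (q - xb)) \<in> Z"
      by (rule cone[folded xb_def])
    then show "q \<in> Z"
      using assms(1) by simp
  qed
  moreover have "xb \<in> Z"
    using xb_ball assms(1,3) by (simp add: subset_iff)
  moreover have "(norm (x - xb))\<^sup>2 + (\<alpha> * s / 3)\<^sup>2 < 2 * r * (\<alpha> * s / 3)"
  proof -
    have "norm (x - xb) = \<alpha> * norm (x - xs)"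
      using assms(1) by (simp add: xb_def norm_minus_commute)
    then have "(norm (x - xb))\<^sup>2 \<le> (\<alpha> * d)\<^sup>2"
      using \<open>norm (x - xs) \<le> d\<close> assms(1) by (simp add: power_mono)
    moreover have "\<alpha> * (d\<^sup>2 + (s / 3)\<^sup>2) < 2 * r * (s / 3)"
    proof -
      have "\<alpha> * (d\<^sup>2 + (s / 3)\<^sup>2) \<le> \<alpha> * (d\<^sup>2 + s\<^sup>2)"
        using assms(1) by (simp add: power_divide)
      moreover have "0 < \<alpha> * (d\<^sup>2 + s\<^sup>2)"
        using assms(1,3) by (simp add: add_nonneg_pos)
      ultimately show ?thesis
        using assms(4) by linarith
    qed
    then have "\<alpha> * (\<alpha> * (d\<^sup>2 + (s / 3)\<^sup>2)) < \<alpha> * (2 * r * (s / 3))"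
      using assms(1) by (rule mult_strict_left_mono)
    ultimately show ?thesis
      by (simp add: power2_eq_square algebra_simps)
  qed
  ultimately show "\<exists>xb\<in>Z. (norm (x - xb))\<^sup>2 + (\<alpha> * s / 3)\<^sup>2 < 2 * r * (\<alpha> * s / 3) \<and>
      cball xb (3 * (\<alpha> * s / 3)) \<subseteq> Z"
    by auto
qed

lemma cone_condition_imp_ex_interior_balls:
  assumes "0 < r" and "0 < s" and "cone_condition s d Z"
  obtains \<rho> where "0 < \<rho>" and "6 * \<rho> \<le> r" and "interior_balls r \<rho> Z"
proof -
  define \<alpha> where "\<alpha> = min 1 (r * s / (2 * (d\<^sup>2 + s\<^sup>2)))"
  have "0 < d\<^sup>2 + s\<^sup>2"
    using assms(2) by (simp add: add_nonneg_pos)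
  then have "0 < \<alpha>" and "\<alpha> \<le> 1"
    using assms(1,2) by (auto simp: \<alpha>_def)
  have "\<alpha> \<le> r * s / (2 * (d\<^sup>2 + s\<^sup>2))"
    by (simp add: \<alpha>_def)
  then have small: "\<alpha> * (d\<^sup>2 + s\<^sup>2) \<le> r * s / 2"
    using \<open>0 < d\<^sup>2 + s\<^sup>2\<close> by (simp add: le_divide_eq algebra_simps)
  have "\<alpha> * s\<^sup>2 \<le> \<alpha> * (d\<^sup>2 + s\<^sup>2)"
    using \<open>0 < \<alpha>\<close> by simp
  then have "(\<alpha> * s) * s \<le> (r / 2) * s"
    using small by (simp add: power2_eq_square algebra_simps)
  then have "6 * (\<alpha> * s / 3) \<le> r"
    using assms(2) by simp
  moreover from \<open>0 < \<alpha>\<close> \<open>\<alpha> \<le> 1\<close> assms(2) small assms(3)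
  have "interior_balls r (\<alpha> * s / 3) Z"
    by (rule cone_condition_imp_interior_balls)
  moreover have "0 < \<alpha> * s / 3"
    using \<open>0 < \<alpha>\<close> assms(2) by simp
  ultimately show ?thesis
    using that by blast
qed

theorem lemma1p6:
  fixes Z :: "'a::{real_inner,complete_space} set" and r :: real
  assumes "r > 0" and "prox_regular r Z"
  shows "(\<exists>\<rho>. 0 < \<rho> \<and> \<rho> < r / 5 \<and>
            (\<forall>x\<in>Z. \<exists>xb\<in>Z. (norm (x - xb))\<^sup>2 + \<rho>\<^sup>2 < 2 * r * \<rho> \<and> cball xb (3 * \<rho>) \<subseteq> Z))
     \<longleftrightarrow>
         (\<exists>s>0. \<exists>d>0. \<forall>x\<in>Z. \<exists>xs\<in>Z. norm (x - xs) \<le> d \<and>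
            (\<forall>\<alpha>. 0 < \<alpha> \<and> \<alpha> \<le> 1 \<longrightarrow>
               (\<forall>v. norm v \<le> s \<longrightarrow> x + \<alpha> *\<^sub>R (xs - x) + \<alpha> *\<^sub>R v \<in> Z)))"
  unfolding interior_balls_def [symmetric] cone_condition_def [symmetric]
proof
  assume "\<exists>\<rho>. 0 < \<rho> \<and> \<rho> < r / 5 \<and> interior_balls r \<rho> Z"
  then obtain \<rho> where "0 < \<rho>" and "4 * \<rho> \<le> r" and "interior_balls r \<rho> Z"
    by auto
  then have "cone_condition \<rho> r Z"
    by (rule interior_balls_imp_cone_condition[OF assms(2)])
  then show "\<exists>s>0. \<exists>d>0. cone_condition s d Z"
    using \<open>0 < \<rho>\<close> assms(1) by blast
next
  assume "\<exists>s>0. \<exists>d>0. cone_condition s d Z"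
  then obtain s d where "0 < s" and "cone_condition s d Z"
    by blast
  then obtain \<rho> where "0 < \<rho>" and "6 * \<rho> \<le> r" and "interior_balls r \<rho> Z"
    using cone_condition_imp_ex_interior_balls assms(1) by blast
  then show "\<exists>\<rho>. 0 < \<rho> \<and> \<rho> < r / 5 \<and> interior_balls r \<rho> Z"
    by (intro exI[of _ \<rho>]) simp
qed

end
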